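(* Let $\pi$ be an $r$-homogeneous strongly log-concave distribution with $r\ge 2$ and associated matroid $\mathcal{M}$. Let $f^{(2)}:\mathcal{M}(2)\to\mathbb{R}_{\ge0}$ and $f^{(1)}=P^{\uparrow}_1 f^{(2)}$, i.e. $f^{(1)}(v)=\sum_{S\in\mathcal{M}(2),v\in S}\frac{w(S)}{w(\{v\})}f^{(2)}(S)$. Then $$\mathrm{Ent}_{\pi_2}(f^{(2)})\ge 2\,\mathrm{Ent}_{\pi_1}(f^{(1)}).$$
   Context: $\pi:2^{[n]}\to\mathbb{R}_{\ge0}$ has generating polynomial $g_\pi(x)=\sum_S\pi(S)\prod_{i\in S}x_i$; $r$-homogeneous means the support consists of $r$-sets; strongly log-concave means for every $J\subseteq[n]$, $\nabla^2\log(\partial_J g_\pi)$ is negative semidefinite at the all-ones vector. The support $\mathcal{B}$ is the set of bases of a rank-$r$ matroid $\mathcal{M}=(E,\mathcal{I})$; $\mathcal{M}(k)$ = independent sets of size $k$. Weights: $w(I)=(r-|I|)!\sum_{B\in\mathcal{B},B\supseteq I}\pi(B)$ for $I\in\mathcal{I}$; $\pi_k(I)=w(I)/\sum_{I'\in\mathcal{M}(k)}w(I')$ on $\mathcal{M}(k)$ (identify $\mathcal{M}(1)$ with elements $v$). $\mathrm{Ent}_\mu(f)=\mathbb{E}_\mu(f\log f)-\mathbb{E}_\mu f\log\mathbb{E}_\mu f$ with $0\log0=0$. *)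

theory Defs
  imports Complex_Main
begin

text \<open>Multi-affine polynomials in the variables indexed by a finite ground set E are
represented by their coefficient function q :: 'a set \<Rightarrow> real
(coefficient of the monomial prod_{i in S} x_i).\<close>

definition mpoly_eval :: "'a set \<Rightarrow> ('a set \<Rightarrow> real) \<Rightarrow> ('a \<Rightarrow> real) \<Rightarrow> real" where
  "mpoly_eval E q x = (\<Sum>S\<in>Pow E. q S * (\<Prod>i\<in>S. x i))"

definition mpoly_partial :: "'a \<Rightarrow> ('a set \<Rightarrow> real) \<Rightarrow> ('a set \<Rightarrow> real)" where
  "mpoly_partial i q = (\<lambda>T. if i \<in> T then 0 else q (insert i T))"

definition mpoly_partial_set :: "'a set \<Rightarrow> ('a set \<Rightarrow> real) \<Rightarrow> ('a set \<Rightarrow> real)" where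
  "mpoly_partial_set J q = (\<lambda>T. if T \<inter> J = {} then q (T \<union> J) else 0)"

text \<open>Entry (i,j) of the Hessian of log h at the all-ones vector, where h is the
multi-affine polynomial with coefficients q:
  (h * d_i d_j h - d_i h * d_j h) / h^2.\<close>
definition log_hessian_at_ones :: "'a set \<Rightarrow> ('a set \<Rightarrow> real) \<Rightarrow> 'a \<Rightarrow> 'a \<Rightarrow> real" where
  "log_hessian_at_ones E q i j =
     (let h = mpoly_eval E q (\<lambda>_. 1);
          hi = mpoly_eval E (mpoly_partial i q) (\<lambda>_. 1);
          hj = mpoly_eval E (mpoly_partial j q) (\<lambda>_. 1);
          hij = mpoly_eval E (mpoly_partial i (mpoly_partial j q)) (\<lambda>_. 1)
      in (h * hij - hi * hj) / h\<^sup>2)"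

text \<open>Strong log-concavity of the generating polynomial g_pi: for every J subset of E,
the Hessian of log(d_J g_pi) at the all-ones vector is negative semidefinite
(whenever d_J g_pi is not the zero polynomial, i.e. its value at ones is positive;
the zero polynomial is log-concave by convention).\<close>
definition strongly_log_concave :: "'a set \<Rightarrow> ('a set \<Rightarrow> real) \<Rightarrow> bool" where
  "strongly_log_concave E \<pi> \<longleftrightarrow>
     (\<forall>J\<subseteq>E. mpoly_eval E (mpoly_partial_set J \<pi>) (\<lambda>_. 1) > 0 \<longrightarrow>
        (\<forall>c::'a \<Rightarrow> real. (\<Sum>i\<in>E. \<Sum>j\<in>E. c i * c j *
            log_hessian_at_ones E (mpoly_partial_set J \<pi>) i j) \<le> 0))"

definition homogeneous_distribution :: "'a set \<Rightarrow> nat \<Rightarrow> ('a set \<Rightarrow> real) \<Rightarrow> bool" where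
  "homogeneous_distribution E r \<pi> \<longleftrightarrow>
     (\<forall>S. \<pi> S \<ge> 0) \<and> (\<forall>S. \<pi> S \<noteq> 0 \<longrightarrow> S \<subseteq> E \<and> card S = r) \<and>
     (\<Sum>S\<in>Pow E. \<pi> S) = 1"

text \<open>Bases of the associated matroid = support of pi; independent sets = subsets of bases.\<close>
definition bases :: "'a set \<Rightarrow> ('a set \<Rightarrow> real) \<Rightarrow> 'a set set" where
  "bases E \<pi> = {B. B \<subseteq> E \<and> \<pi> B \<noteq> 0}"

definition indep :: "'a set \<Rightarrow> ('a set \<Rightarrow> real) \<Rightarrow> 'a set \<Rightarrow> bool" where
  "indep E \<pi> I \<longleftrightarrow> (\<exists>B\<in>bases E \<pi>. I \<subseteq> B)"

definition level :: "'a set \<Rightarrow> ('a set \<Rightarrow> real) \<Rightarrow> nat \<Rightarrow> 'a set set" where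
  "level E \<pi> k = {I. indep E \<pi> I \<and> card I = k}"

definition weight :: "'a set \<Rightarrow> nat \<Rightarrow> ('a set \<Rightarrow> real) \<Rightarrow> 'a set \<Rightarrow> real" where
  "weight E r \<pi> I = fact (r - card I) * (\<Sum>B\<in>{B\<in>bases E \<pi>. I \<subseteq> B}. \<pi> B)"

definition pi_k :: "'a set \<Rightarrow> nat \<Rightarrow> ('a set \<Rightarrow> real) \<Rightarrow> nat \<Rightarrow> 'a set \<Rightarrow> real" where
  "pi_k E r \<pi> k I = weight E r \<pi> I / (\<Sum>I'\<in>level E \<pi> k. weight E r \<pi> I')"

definition xlogx :: "real \<Rightarrow> real" where
  "xlogx t = (if t = 0 then 0 else t * ln t)"

definition Ent :: "'b set \<Rightarrow> ('b \<Rightarrow> real) \<Rightarrow> ('b \<Rightarrow> real) \<Rightarrow> real" where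
  "Ent X \<mu> f = (\<Sum>x\<in>X. \<mu> x * xlogx (f x)) - xlogx (\<Sum>x\<in>X. \<mu> x * f x)"

definition up1 :: "'a set \<Rightarrow> nat \<Rightarrow> ('a set \<Rightarrow> real) \<Rightarrow> ('a set \<Rightarrow> real) \<Rightarrow> 'a \<Rightarrow> real" where
  "up1 E r \<pi> f2 v = (\<Sum>S\<in>{S\<in>level E \<pi> 2. v \<in> S}.
       weight E r \<pi> S / weight E r \<pi> {v} * f2 S)"

end

theory Submission
  imports Defs
begin

text \<open>Let Q A (marginal A below) be the \<pi>-mass of the sets containing A, so that \<pi>_1 and
  \<pi>_2 are proportional to Q {v} and Q {u, v}. Strong log-concavity at J = {} says that the
  matrix of pair marginals minus the rank-one matrix Q {i} Q {j} is negative semidefinite; since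
  its row sums are (r - 1) Q {i}, centring improves this to the second-moment bound
  E_{\<pi>_2} [f_1 u f_1 v] \<le> (E_{\<pi>_1} f_1)^2 for f_1 = P_1 f_2. The entropy inequality then
  follows from ln x \<le> x - 1 applied termwise.\<close>

lemma xlogx_eq_mult_ln: "xlogx t = t * ln t"
  by (simp add: xlogx_def)

lemma xlogx_relative_ge:
  fixes a b m L :: real
  assumes "a \<ge> 0" "b \<ge> 0" "m \<ge> 0"
    and "a > 0 \<Longrightarrow> b > 0 \<and> L = ln b" and "m = 0 \<Longrightarrow> a = 0"
  shows "a - b / m \<le> xlogx a - a * L + a * ln m"
proof (cases "a = 0")
  case True
  then show ?thesis using assms(2,3) by (simp add: xlogx_def)
next
  case False
  then have a: "a > 0" using assms(1) by simp
  then have b: "b > 0" and L: "L = ln b" using assms(4) by auto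
  have m: "m > 0" using assms(3,5) False by force
  have "ln b - ln a - ln m = ln (b / (a * m))" using a b m by (simp add: ln_div ln_mult)
  also have "\<dots> \<le> b / (a * m) - 1" using a b m by (intro ln_le_minus_one) simp
  finally have "a * (ln b - ln a - ln m) \<le> a * (b / (a * m) - 1)" using a by (simp add: mult_left_mono)
  also have "\<dots> = b / m - a" using a m by (simp add: field_simps)
  finally show ?thesis using L by (simp add: xlogx_eq_mult_ln algebra_simps)
qed

lemma mpoly_eval_partial_set_ones:
  assumes "finite E" "A \<subseteq> E"
  shows "mpoly_eval E (mpoly_partial_set A q) (\<lambda>_. 1) = (\<Sum>B\<in>{B\<in>Pow E. A \<subseteq> B}. q B)"
proof -
  have "mpoly_eval E (mpoly_partial_set A q) (\<lambda>_. 1) = (\<Sum>T\<in>{T\<in>Pow E. T \<inter> A = {}}. q (T \<union> A))"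
    using assms by (simp add: mpoly_eval_def mpoly_partial_set_def sum.If_cases Int_def)
  also have "\<dots> = (\<Sum>B\<in>{B\<in>Pow E. A \<subseteq> B}. q B)"
    by (rule sum.reindex_bij_betw, rule bij_betw_byWitness[where f' = "\<lambda>B. B - A"])
       (use assms in auto)
  finally show ?thesis .
qed

lemma mpoly_partial_eq_partial_set_singleton: "mpoly_partial i q = mpoly_partial_set {i} q"
  by (auto simp: mpoly_partial_def mpoly_partial_set_def fun_eq_iff)

lemma mpoly_partial_partial_eq_partial_set_pair:
  "i \<noteq> j \<Longrightarrow> mpoly_partial i (mpoly_partial j q) = mpoly_partial_set {i, j} q"
  by (auto simp: mpoly_partial_def mpoly_partial_set_def fun_eq_iff insert_commute)

lemma mpoly_partial_twice: "mpoly_partial i (mpoly_partial i q) = (\<lambda>_. 0)"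
  by (auto simp: mpoly_partial_def fun_eq_iff)

lemma sum_distinct_pairs_eq_sum_2_subsets:
  fixes G :: "'a set \<Rightarrow> real"
  assumes "finite E"
  shows "(\<Sum>u\<in>E. \<Sum>v\<in>E. if u = v then 0 else G {u, v}) = 2 * (\<Sum>S\<in>{S\<in>Pow E. card S = 2}. G S)"
proof -
  have pairs_through: "bij_betw (\<lambda>v. {u, v}) (E - {u}) {S\<in>Pow E. card S = 2 \<and> u \<in> S}"
    if "u \<in> E" for u
  proof (rule bij_betw_byWitness[where f' = "\<lambda>S. the_elem (S - {u})"])
    show "\<forall>S\<in>{S\<in>Pow E. card S = 2 \<and> u \<in> S}. {u, the_elem (S - {u})} = S"
      by (auto simp: card_2_iff insert_Diff_if)
    show "(\<lambda>S. the_elem (S - {u})) ` {S\<in>Pow E. card S = 2 \<and> u \<in> S} \<subseteq> E - {u}"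
      by (auto simp: card_2_iff insert_Diff_if)
  qed (use that in \<open>auto simp: insert_Diff_if\<close>)
  have "(\<Sum>u\<in>E. \<Sum>v\<in>E. if u = v then 0 else G {u, v}) = (\<Sum>u\<in>E. \<Sum>v\<in>E - {u}. G {u, v})"
    using assms by (auto intro!: sum.cong simp: sum.If_cases Diff_eq)
  also have "\<dots> = (\<Sum>u\<in>E. \<Sum>S\<in>{S\<in>Pow E. card S = 2 \<and> u \<in> S}. G S)"
    using pairs_through by (intro sum.cong refl sum.reindex_bij_betw) auto
  also have "\<dots> = (\<Sum>S\<in>{S\<in>Pow E. card S = 2}. \<Sum>u\<in>{u\<in>E. u \<in> S}. G S)"
    using sum.swap_restrict[of E "{S\<in>Pow E. card S = 2}" "\<lambda>u S. G S" "\<lambda>u S. u \<in> S"] assms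
    by (simp add: conj_ac)
  also have "\<dots> = (\<Sum>S\<in>{S\<in>Pow E. card S = 2}. 2 * G S)"
  proof (rule sum.cong)
    fix S assume "S \<in> {S\<in>Pow E. card S = 2}"
    then have "{u\<in>E. u \<in> S} = S" "card S = 2" by auto
    then show "(\<Sum>u\<in>{u\<in>E. u \<in> S}. G S) = 2 * G S" by simp
  qed simp
  finally show ?thesis by (simp add: sum_distrib_left)
qed

text \<open>Testing the semidefiniteness hypothesis on z shifted by its q-weighted mean,
  rather than on z itself, improves the constant from 1 to (d - 1) / d.\<close>
lemma quadratic_form_le_centered:
  fixes K :: "'a \<Rightarrow> 'a \<Rightarrow> real" and q z :: "'a \<Rightarrow> real" and d :: real
  assumes "finite E" "d > 0"
    and rows: "\<And>i. i \<in> E \<Longrightarrow> (\<Sum>j\<in>E. K i j) = (d - 1) * q i"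
    and cols: "\<And>j. j \<in> E \<Longrightarrow> (\<Sum>i\<in>E. K i j) = (d - 1) * q j"
    and total: "(\<Sum>i\<in>E. q i) = d"
    and nsd: "\<And>c. (\<Sum>i\<in>E. \<Sum>j\<in>E. c i * c j * K i j) \<le> (\<Sum>i\<in>E. c i * q i)\<^sup>2"
  shows "(\<Sum>i\<in>E. \<Sum>j\<in>E. z i * z j * K i j) \<le> (d - 1) / d * (\<Sum>i\<in>E. z i * q i)\<^sup>2"
proof -
  define s where "s = (\<Sum>i\<in>E. z i * q i)"
  define t where "t = s / d"
  have "(\<Sum>i\<in>E. (z i - t) * q i) = s - t * d"
    by (simp add: s_def total[symmetric] left_diff_distrib sum_subtractf sum_distrib_left)
  then have centered: "(\<Sum>i\<in>E. \<Sum>j\<in>E. (z i - t) * (z j - t) * K i j) \<le> 0"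
    using nsd[of "\<lambda>i. z i - t"] assms(2) by (simp add: t_def)
  have S1: "(\<Sum>i\<in>E. \<Sum>j\<in>E. z i * K i j) = (d - 1) * s"
    by (simp add: sum_distrib_left[symmetric] rows s_def sum_distrib_left algebra_simps cong: sum.cong)
  have "(\<Sum>i\<in>E. \<Sum>j\<in>E. z j * K i j) = (\<Sum>j\<in>E. z j * (\<Sum>i\<in>E. K i j))"
    by (subst sum.swap) (simp add: sum_distrib_left)
  then have S2: "(\<Sum>i\<in>E. \<Sum>j\<in>E. z j * K i j) = (d - 1) * s"
    by (simp add: cols s_def sum_distrib_left algebra_simps cong: sum.cong)
  have S3: "(\<Sum>i\<in>E. \<Sum>j\<in>E. K i j) = (d - 1) * d"
    by (simp add: rows sum_distrib_left[symmetric] total)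
  have "(\<Sum>i\<in>E. \<Sum>j\<in>E. (z i - t) * (z j - t) * K i j) =
     (\<Sum>i\<in>E. \<Sum>j\<in>E. z i * z j * K i j) - t * (\<Sum>i\<in>E. \<Sum>j\<in>E. z i * K i j)
       - t * (\<Sum>i\<in>E. \<Sum>j\<in>E. z j * K i j) + t\<^sup>2 * (\<Sum>i\<in>E. \<Sum>j\<in>E. K i j)"
    by (simp add: sum_distrib_left sum_subtractf sum.distrib power2_eq_square algebra_simps)
  also have "\<dots> = (\<Sum>i\<in>E. \<Sum>j\<in>E. z i * z j * K i j) - (d - 1) / d * s\<^sup>2"
    unfolding S1 S2 S3 t_def using assms(2) by (simp add: field_simps power2_eq_square)
  finally show ?thesis using centered by (simp add: s_def)
qed

lemma sum_pair_projection:
  fixes \<mu>\<^sub>1 f\<^sub>1 g :: "'a \<Rightarrow> real" and \<mu>\<^sub>2 f\<^sub>2 :: "'a set \<Rightarrow> real"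
  assumes "finite X" "finite V" and "\<And>S. S \<in> X \<Longrightarrow> S \<subseteq> V"
    and mass: "\<And>v. v \<in> V \<Longrightarrow> \<mu>\<^sub>1 v * f\<^sub>1 v = (\<Sum>S\<in>{S\<in>X. v \<in> S}. \<mu>\<^sub>2 S * f\<^sub>2 S) / 2"
  shows "(\<Sum>v\<in>V. \<mu>\<^sub>1 v * f\<^sub>1 v * g v) = (\<Sum>S\<in>X. \<mu>\<^sub>2 S * f\<^sub>2 S * (\<Sum>v\<in>S. g v)) / 2"
proof -
  have "(\<Sum>v\<in>V. \<mu>\<^sub>1 v * f\<^sub>1 v * g v) = (\<Sum>v\<in>V. \<Sum>S\<in>{S\<in>X. v \<in> S}. \<mu>\<^sub>2 S * f\<^sub>2 S * g v / 2)"
    by (simp add: mass sum_distrib_right sum_divide_distrib)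
  also have "\<dots> = (\<Sum>S\<in>X. \<Sum>v\<in>{v\<in>V. v \<in> S}. \<mu>\<^sub>2 S * f\<^sub>2 S * g v / 2)"
    using sum.swap_restrict[OF assms(2,1), of "\<lambda>v S. \<mu>\<^sub>2 S * f\<^sub>2 S * g v / 2" "\<lambda>v S. v \<in> S"] by simp
  also have "\<dots> = (\<Sum>S\<in>X. \<mu>\<^sub>2 S * f\<^sub>2 S * (\<Sum>v\<in>S. g v) / 2)"
    using assms(3) by (intro sum.cong refl) (auto simp: sum_distrib_left sum_divide_distrib Int_absorb1
        intro!: sum.cong)
  finally show ?thesis by (simp add: sum_divide_distrib)
qed

lemma pair_projection_sign:
  fixes \<mu>\<^sub>1 f\<^sub>1 :: "'a \<Rightarrow> real" and \<mu>\<^sub>2 f\<^sub>2 :: "'a set \<Rightarrow> real"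
  assumes "finite X" and pairs: "\<And>S. S \<in> X \<Longrightarrow> S \<subseteq> V"
    and \<mu>\<^sub>1_pos: "\<And>v. v \<in> V \<Longrightarrow> \<mu>\<^sub>1 v > 0" and \<mu>\<^sub>2_pos: "\<And>S. S \<in> X \<Longrightarrow> \<mu>\<^sub>2 S > 0"
    and f\<^sub>2_nonneg: "\<And>S. S \<in> X \<Longrightarrow> f\<^sub>2 S \<ge> 0"
    and mass: "\<And>v. v \<in> V \<Longrightarrow> \<mu>\<^sub>1 v * f\<^sub>1 v = (\<Sum>S\<in>{S\<in>X. v \<in> S}. \<mu>\<^sub>2 S * f\<^sub>2 S) / 2"
  shows "v \<in> V \<Longrightarrow> f\<^sub>1 v \<ge> 0"
    and "S \<in> X \<Longrightarrow> f\<^sub>2 S > 0 \<Longrightarrow> v \<in> S \<Longrightarrow> f\<^sub>1 v > 0"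
proof -
  have mass_nonneg: "(\<Sum>S\<in>{S\<in>X. v \<in> S}. \<mu>\<^sub>2 S * f\<^sub>2 S) \<ge> 0" for v
    using \<mu>\<^sub>2_pos f\<^sub>2_nonneg by (intro sum_nonneg) (simp add: less_imp_le)
  show "f\<^sub>1 v \<ge> 0" if "v \<in> V"
  proof -
    have "0 \<le> \<mu>\<^sub>1 v * f\<^sub>1 v" using mass[OF that] mass_nonneg[of v] by simp
    then show ?thesis using \<mu>\<^sub>1_pos[OF that] by (simp add: zero_le_mult_iff)
  qed
  show "f\<^sub>1 v > 0" if "S \<in> X" "f\<^sub>2 S > 0" "v \<in> S"
  proof -
    have v: "v \<in> V" using pairs that by blast
    have "0 < \<mu>\<^sub>2 S * f\<^sub>2 S" using \<mu>\<^sub>2_pos that by simp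
    also have "\<dots> \<le> (\<Sum>S\<in>{S\<in>X. v \<in> S}. \<mu>\<^sub>2 S * f\<^sub>2 S)"
      using that assms(1) \<mu>\<^sub>2_pos f\<^sub>2_nonneg by (intro member_le_sum) (simp_all add: less_imp_le)
    finally have "0 < \<mu>\<^sub>1 v * f\<^sub>1 v" using mass[OF v] by simp
    then show ?thesis using \<mu>\<^sub>1_pos[OF v] by (simp add: zero_less_mult_iff)
  qed
qed

text \<open>With m the common mean, the difference of the two entropies is the mu_2-average of
  f_2 S * ln (m * f_2 S / (f_1 u * f_1 v)) over S = {u, v}; the inequality ln x \<le> x - 1
  bounds it below by m minus (second moment of f_1) / m.\<close>
lemma entropy_pair_projection_le:
  fixes \<mu>\<^sub>1 f\<^sub>1 :: "'a \<Rightarrow> real" and \<mu>\<^sub>2 f\<^sub>2 :: "'a set \<Rightarrow> real"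
  assumes "finite X" "finite V" and pairs: "\<And>S. S \<in> X \<Longrightarrow> S \<subseteq> V \<and> card S = 2"
    and \<mu>\<^sub>1_pos: "\<And>v. v \<in> V \<Longrightarrow> \<mu>\<^sub>1 v > 0" and \<mu>\<^sub>2_pos: "\<And>S. S \<in> X \<Longrightarrow> \<mu>\<^sub>2 S > 0"
    and f\<^sub>2_nonneg: "\<And>S. S \<in> X \<Longrightarrow> f\<^sub>2 S \<ge> 0"
    and mass: "\<And>v. v \<in> V \<Longrightarrow> \<mu>\<^sub>1 v * f\<^sub>1 v = (\<Sum>S\<in>{S\<in>X. v \<in> S}. \<mu>\<^sub>2 S * f\<^sub>2 S) / 2"
    and moment: "(\<Sum>S\<in>X. \<mu>\<^sub>2 S * (\<Prod>v\<in>S. f\<^sub>1 v)) \<le> (\<Sum>S\<in>X. \<mu>\<^sub>2 S * f\<^sub>2 S)\<^sup>2"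
  shows "2 * Ent V \<mu>\<^sub>1 f\<^sub>1 \<le> Ent X \<mu>\<^sub>2 f\<^sub>2"
proof -
  define m where "m = (\<Sum>S\<in>X. \<mu>\<^sub>2 S * f\<^sub>2 S)"
  define L where "L S = (\<Sum>v\<in>S. ln (f\<^sub>1 v))" for S
  have proj: "(\<Sum>v\<in>V. \<mu>\<^sub>1 v * f\<^sub>1 v * g v) = (\<Sum>S\<in>X. \<mu>\<^sub>2 S * f\<^sub>2 S * (\<Sum>v\<in>S. g v)) / 2" for g
    using assms(1,2) pairs mass by (intro sum_pair_projection) auto
  note sign = pair_projection_sign[where X = X and V = V and \<mu>\<^sub>1 = \<mu>\<^sub>1 and f\<^sub>1 = f\<^sub>1
      and \<mu>\<^sub>2 = \<mu>\<^sub>2 and f\<^sub>2 = f\<^sub>2]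
  have f\<^sub>1_nonneg: "f\<^sub>1 v \<ge> 0" if "v \<in> V" for v
    by (rule sign(1)) (use assms(1) pairs \<mu>\<^sub>1_pos \<mu>\<^sub>2_pos f\<^sub>2_nonneg mass that in auto)
  have f\<^sub>1_pos: "f\<^sub>1 v > 0" if "S \<in> X" "f\<^sub>2 S > 0" "v \<in> S" for S v
    by (rule sign(2)) (use assms(1) pairs \<mu>\<^sub>1_pos \<mu>\<^sub>2_pos f\<^sub>2_nonneg mass that in auto)
  have m_nonneg: "m \<ge> 0"
    unfolding m_def using \<mu>\<^sub>2_pos f\<^sub>2_nonneg by (intro sum_nonneg) (simp add: less_imp_le)
  have m_zero: "f\<^sub>2 S = 0" if "m = 0" "S \<in> X" for S
    using that \<mu>\<^sub>2_pos f\<^sub>2_nonneg assms(1) unfolding m_def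
    by (subst (asm) sum_nonneg_eq_0_iff) (fastforce intro: less_imp_le)+
  have mean: "(\<Sum>v\<in>V. \<mu>\<^sub>1 v * f\<^sub>1 v) = m"
    using proj[of "\<lambda>_. 1"] pairs by (simp add: m_def sum_distrib_right[symmetric] cong: sum.cong)
  have Ent\<^sub>1: "Ent V \<mu>\<^sub>1 f\<^sub>1 = (\<Sum>S\<in>X. \<mu>\<^sub>2 S * f\<^sub>2 S * L S) / 2 - xlogx m"
    using proj[of "\<lambda>v. ln (f\<^sub>1 v)"]
    by (simp add: Ent_def mean xlogx_eq_mult_ln L_def mult.assoc)
  have termwise: "\<mu>\<^sub>2 S * (f\<^sub>2 S - (\<Prod>v\<in>S. f\<^sub>1 v) / m)
      \<le> \<mu>\<^sub>2 S * (xlogx (f\<^sub>2 S) - f\<^sub>2 S * L S + f\<^sub>2 S * ln m)" if S: "S \<in> X" for S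
  proof -
    have "finite S" "S \<subseteq> V" using pairs[OF S] by (auto intro: card_ge_0_finite)
    then have "f\<^sub>2 S > 0 \<Longrightarrow> (\<Prod>v\<in>S. f\<^sub>1 v) > 0 \<and> L S = ln (\<Prod>v\<in>S. f\<^sub>1 v)"
      using f\<^sub>1_pos[OF S] by (simp add: prod_pos ln_prod L_def less_imp_neq[symmetric])
    moreover have "(\<Prod>v\<in>S. f\<^sub>1 v) \<ge> 0" using f\<^sub>1_nonneg \<open>S \<subseteq> V\<close> by (intro prod_nonneg) auto
    ultimately show ?thesis
      using xlogx_relative_ge[OF f\<^sub>2_nonneg[OF S] _ m_nonneg] m_zero[OF _ S] \<mu>\<^sub>2_pos[OF S]
      by (simp add: mult_left_mono)
  qed
  have "0 \<le> m - (\<Sum>S\<in>X. \<mu>\<^sub>2 S * (\<Prod>v\<in>S. f\<^sub>1 v)) / m"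
  proof (cases "m = 0")
    case False
    then have "(\<Sum>S\<in>X. \<mu>\<^sub>2 S * (\<Prod>v\<in>S. f\<^sub>1 v)) / m \<le> m\<^sup>2 / m"
      using moment m_nonneg by (simp add: divide_right_mono m_def)
    then show ?thesis by (simp add: power2_eq_square)
  qed simp
  also have "\<dots> = (\<Sum>S\<in>X. \<mu>\<^sub>2 S * (f\<^sub>2 S - (\<Prod>v\<in>S. f\<^sub>1 v) / m))"
    by (simp add: m_def right_diff_distrib sum_subtractf sum_divide_distrib)
  also have "\<dots> \<le> (\<Sum>S\<in>X. \<mu>\<^sub>2 S * (xlogx (f\<^sub>2 S) - f\<^sub>2 S * L S + f\<^sub>2 S * ln m))"
    by (rule sum_mono) (rule termwise)
  also have "\<dots> = (\<Sum>S\<in>X. \<mu>\<^sub>2 S * xlogx (f\<^sub>2 S)) - (\<Sum>S\<in>X. \<mu>\<^sub>2 S * f\<^sub>2 S * L S) + xlogx m"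
    by (simp add: algebra_simps sum.distrib sum_subtractf m_def xlogx_eq_mult_ln sum_distrib_right)
  finally show ?thesis unfolding Ent\<^sub>1 by (simp add: Ent_def m_def)
qed

locale homogeneous_setting =
  fixes E :: "'a set" and r :: nat and \<pi> :: "'a set \<Rightarrow> real"
  assumes finite_E: "finite E" and r_ge_2: "r \<ge> 2"
    and homogeneous: "homogeneous_distribution E r \<pi>"
begin

lemma \<pi>_nonneg: "\<pi> S \<ge> 0"
  using homogeneous by (simp add: homogeneous_distribution_def)

lemma \<pi>_support: "\<pi> S \<noteq> 0 \<Longrightarrow> S \<subseteq> E \<and> card S = r"
  using homogeneous by (simp add: homogeneous_distribution_def)

lemma sum_\<pi>: "(\<Sum>S\<in>Pow E. \<pi> S) = 1"
  using homogeneous by (simp add: homogeneous_distribution_def)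

definition marginal :: "'a set \<Rightarrow> real" where
  "marginal A = (\<Sum>B\<in>{B\<in>Pow E. A \<subseteq> B}. \<pi> B)"

lemma marginal_empty: "marginal {} = 1"
  using sum_\<pi> by (simp add: marginal_def Pow_def)

lemma weight_eq_marginal: "weight E r \<pi> I = fact (r - card I) * marginal I"
proof -
  have "(\<Sum>B\<in>{B\<in>bases E \<pi>. I \<subseteq> B}. \<pi> B) = marginal I"
    unfolding marginal_def by (rule sum.mono_neutral_left) (auto simp: finite_E bases_def)
  then show ?thesis by (simp add: weight_def)
qed

lemma marginal_pos: "indep E \<pi> I \<Longrightarrow> marginal I > 0"
proof -
  assume "indep E \<pi> I"
  then obtain B where B: "B \<in> bases E \<pi>" "I \<subseteq> B" by (auto simp: indep_def)
  have "0 < \<pi> B" using B \<pi>_nonneg[of B] by (auto simp: bases_def order_le_less)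
  also have "\<dots> \<le> marginal I"
    unfolding marginal_def using B finite_E by (intro member_le_sum) (auto simp: bases_def \<pi>_nonneg)
  finally show ?thesis .
qed

lemma marginal_eq_0: "\<not> indep E \<pi> I \<Longrightarrow> marginal I = 0"
  unfolding marginal_def by (rule sum.neutral) (auto simp: indep_def bases_def)

lemma finite_level: "finite (level E \<pi> k)"
  by (rule finite_subset[of _ "Pow E"]) (auto simp: level_def indep_def bases_def finite_E)

lemma level_subset: "I \<in> level E \<pi> k \<Longrightarrow> I \<subseteq> E"
  by (auto simp: level_def indep_def bases_def)

lemma sum_marginal_singletons: "(\<Sum>i\<in>E. marginal {i}) = r"
proof -
  have "(\<Sum>i\<in>E. marginal {i}) = (\<Sum>B\<in>Pow E. \<Sum>i\<in>{i\<in>E. i \<in> B}. \<pi> B)"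
    using sum.swap_restrict[of E "Pow E" "\<lambda>i B. \<pi> B" "\<lambda>i B. i \<in> B"] finite_E
    by (simp add: marginal_def)
  also have "\<dots> = (\<Sum>B\<in>Pow E. r * \<pi> B)"
  proof (rule sum.cong)
    fix B assume "B \<in> Pow E"
    then have "{i\<in>E. i \<in> B} = B" by auto
    then show "(\<Sum>i\<in>{i\<in>E. i \<in> B}. \<pi> B) = r * \<pi> B"
      using \<pi>_support[of B] by (cases "\<pi> B = 0") auto
  qed simp
  finally show ?thesis using sum_\<pi> by (simp add: sum_distrib_left[symmetric])
qed

definition pair_marginal :: "'a \<Rightarrow> 'a \<Rightarrow> real" where
  "pair_marginal i j = (if i = j then 0 else marginal {i, j})"

lemma pair_marginal_commute: "pair_marginal i j = pair_marginal j i"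
  by (simp add: pair_marginal_def insert_commute)

lemma sum_pair_marginal:
  assumes "i \<in> E"
  shows "(\<Sum>j\<in>E. pair_marginal i j) = (real r - 1) * marginal {i}"
proof -
  have "(\<Sum>j\<in>E. pair_marginal i j) = (\<Sum>j\<in>E - {i}. \<Sum>B\<in>{B\<in>Pow E. {i, j} \<subseteq> B}. \<pi> B)"
    using finite_E assms by (simp add: pair_marginal_def marginal_def sum.If_cases Diff_eq[symmetric])
  also have "\<dots> = (\<Sum>B\<in>Pow E. \<Sum>j\<in>{j\<in>E - {i}. {i, j} \<subseteq> B}. \<pi> B)"
    using sum.swap_restrict[of "E - {i}" "Pow E" "\<lambda>j B. \<pi> B" "\<lambda>j B. {i, j} \<subseteq> B"] finite_E
    by simp
  also have "\<dots> = (\<Sum>B\<in>{B\<in>Pow E. i \<in> B}. (real r - 1) * \<pi> B)"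
  proof (rule sum.mono_neutral_cong_right)
    fix B assume B: "B \<in> {B\<in>Pow E. i \<in> B}"
    then have "{j\<in>E - {i}. {i, j} \<subseteq> B} = B - {i}" "finite B"
      using finite_E finite_subset by auto
    then show "(\<Sum>j\<in>{j\<in>E - {i}. {i, j} \<subseteq> B}. \<pi> B) = (real r - 1) * \<pi> B"
      using \<pi>_support[of B] B r_ge_2 by (cases "\<pi> B = 0") (auto simp: of_nat_diff)
  qed (use finite_E in auto)
  finally show ?thesis by (simp add: marginal_def sum_distrib_left)
qed

lemma log_hessian_at_ones_eq:
  assumes "i \<in> E" "j \<in> E"
  shows "log_hessian_at_ones E \<pi> i j = pair_marginal i j - marginal {i} * marginal {j}"
proof -
  have eval: "mpoly_eval E (mpoly_partial_set A \<pi>) (\<lambda>_. 1) = marginal A" if "A \<subseteq> E" for A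
    using mpoly_eval_partial_set_ones[OF finite_E that] by (simp add: marginal_def)
  have "mpoly_eval E \<pi> (\<lambda>_. 1) = 1"
    using eval[of "{}"] marginal_empty by (simp add: mpoly_partial_set_def)
  moreover have "mpoly_eval E (mpoly_partial i (mpoly_partial j \<pi>)) (\<lambda>_. 1) = pair_marginal i j"
    using eval[of "{i, j}"] assms
    by (cases "i = j") (simp_all add: pair_marginal_def mpoly_partial_twice mpoly_eval_def
        mpoly_partial_partial_eq_partial_set_pair)
  ultimately show ?thesis
    using eval[of "{i}"] eval[of "{j}"] assms
    by (simp add: log_hessian_at_ones_def mpoly_partial_eq_partial_set_singleton)
qed

lemma pair_marginal_quadratic_le:
  assumes "strongly_log_concave E \<pi>"
  shows "(\<Sum>i\<in>E. \<Sum>j\<in>E. z i * z j * pair_marginal i j)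
    \<le> (real r - 1) / real r * (\<Sum>i\<in>E. z i * marginal {i})\<^sup>2"
proof (rule quadratic_form_le_centered[OF finite_E])
  fix c :: "'a \<Rightarrow> real"
  have "mpoly_eval E (mpoly_partial_set {} \<pi>) (\<lambda>_. 1) > 0"
    using mpoly_eval_partial_set_ones[OF finite_E, of "{}" \<pi>] marginal_empty
    by (simp add: marginal_def)
  then have "(\<Sum>i\<in>E. \<Sum>j\<in>E. c i * c j * log_hessian_at_ones E \<pi> i j) \<le> 0"
    using assms unfolding strongly_log_concave_def by (auto simp: mpoly_partial_set_def)
  also have "(\<Sum>i\<in>E. \<Sum>j\<in>E. c i * c j * log_hessian_at_ones E \<pi> i j) =
     (\<Sum>i\<in>E. \<Sum>j\<in>E. c i * c j * pair_marginal i j)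
       - (\<Sum>i\<in>E. \<Sum>j\<in>E. (c i * marginal {i}) * (c j * marginal {j}))"
    by (simp add: log_hessian_at_ones_eq right_diff_distrib sum_subtractf algebra_simps)
  finally show "(\<Sum>i\<in>E. \<Sum>j\<in>E. c i * c j * pair_marginal i j) \<le> (\<Sum>i\<in>E. c i * marginal {i})\<^sup>2"
    by (simp add: power2_eq_square sum_product)
qed (use r_ge_2 in \<open>simp_all add: sum_pair_marginal sum_marginal_singletons pair_marginal_commute\<close>)

lemma sum_level_2_marginal_prod:
  "(\<Sum>S\<in>level E \<pi> 2. marginal S * (\<Prod>v\<in>S. z v))
    = (\<Sum>i\<in>E. \<Sum>j\<in>E. z i * z j * pair_marginal i j) / 2"
proof -
  have "(\<Sum>i\<in>E. \<Sum>j\<in>E. z i * z j * pair_marginal i j)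
      = (\<Sum>i\<in>E. \<Sum>j\<in>E. if i = j then 0 else marginal {i, j} * (\<Prod>v\<in>{i, j}. z v))"
    by (intro sum.cong refl) (simp add: pair_marginal_def)
  also have "\<dots> = 2 * (\<Sum>S\<in>{S\<in>Pow E. card S = 2}. marginal S * (\<Prod>v\<in>S. z v))"
    by (rule sum_distinct_pairs_eq_sum_2_subsets[OF finite_E])
  also have "(\<Sum>S\<in>{S\<in>Pow E. card S = 2}. marginal S * (\<Prod>v\<in>S. z v))
      = (\<Sum>S\<in>level E \<pi> 2. marginal S * (\<Prod>v\<in>S. z v))"
    using finite_E level_subset marginal_eq_0
    by (intro sum.mono_neutral_right) (auto simp: level_def)
  finally show ?thesis by simp
qed

lemma sum_level_2_marginal: "(\<Sum>S\<in>level E \<pi> 2. marginal S) = real r * (real r - 1) / 2"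
  using sum_level_2_marginal_prod[of "\<lambda>_. 1"]
  by (simp add: sum_pair_marginal sum_distrib_left[symmetric] sum_marginal_singletons)

definition nonloops :: "'a set" where
  "nonloops = {v\<in>E. {v} \<in> level E \<pi> 1}"

lemma finite_nonloops: "finite nonloops"
  using finite_E by (simp add: nonloops_def)

lemma marginal_nonloop_pos: "v \<in> nonloops \<Longrightarrow> marginal {v} > 0"
  using marginal_pos by (auto simp: nonloops_def level_def)

lemma sum_nonloops_marginal: "(\<Sum>v\<in>nonloops. marginal {v} * g v) = (\<Sum>v\<in>E. marginal {v} * g v)"
  using finite_E marginal_eq_0 by (intro sum.mono_neutral_left) (auto simp: nonloops_def level_def)

lemma level_2_pair:
  assumes "S \<in> level E \<pi> 2"
  shows "S \<subseteq> nonloops \<and> card S = 2"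
  using assms level_subset[OF assms] by (auto simp: level_def nonloops_def indep_def)

lemma sum_level_weight:
  "(\<Sum>I\<in>level E \<pi> k. weight E r \<pi> I) = fact (r - k) * (\<Sum>I\<in>level E \<pi> k. marginal I)"
  unfolding sum_distrib_left by (rule sum.cong) (simp_all add: weight_eq_marginal level_def)

lemma pi_k_1_eq: "pi_k E r \<pi> 1 {v} = marginal {v} / real r"
proof -
  have "level E \<pi> 1 = (\<lambda>v. {v}) ` nonloops"
    using level_subset by (auto simp: level_def nonloops_def card_1_singleton_iff)
  then have "(\<Sum>I\<in>level E \<pi> 1. marginal I) = (\<Sum>v\<in>nonloops. marginal {v})"
    by (simp add: sum.reindex inj_on_def)
  also have "\<dots> = real r"
    using sum_nonloops_marginal[of "\<lambda>_. 1"] sum_marginal_singletons by simp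
  finally show ?thesis unfolding pi_k_def sum_level_weight by (simp add: weight_eq_marginal)
qed

lemma pi_k_2_eq:
  assumes "card S = 2"
  shows "pi_k E r \<pi> 2 S = 2 * marginal S / (real r * (real r - 1))"
  using assms unfolding pi_k_def sum_level_weight sum_level_2_marginal by (simp add: weight_eq_marginal)

lemma pi_k_1_mult_up1:
  assumes "v \<in> nonloops"
  shows "pi_k E r \<pi> 1 {v} * up1 E r \<pi> f2 v
    = (\<Sum>S\<in>{S\<in>level E \<pi> 2. v \<in> S}. pi_k E r \<pi> 2 S * f2 S) / 2"
  unfolding up1_def sum_distrib_left sum_divide_distrib
proof (rule sum.cong)
  fix S assume "S \<in> {S\<in>level E \<pi> 2. v \<in> S}"
  then have S: "card S = 2" by (simp add: level_def)
  obtain k where k: "r = Suc (Suc k)" using r_ge_2 by (metis add_2_eq_Suc le_Suc_ex)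
  have v: "marginal {v} > 0" using marginal_nonloop_pos[OF assms] .
  have ratio: "weight E r \<pi> S / weight E r \<pi> {v} = marginal S / ((real r - 1) * marginal {v})"
    unfolding weight_eq_marginal S using v by (simp add: k)
  show "pi_k E r \<pi> 1 {v} * (weight E r \<pi> S / weight E r \<pi> {v} * f2 S)
      = pi_k E r \<pi> 2 S * f2 S / 2"
    unfolding pi_k_1_eq pi_k_2_eq[OF S] ratio using v r_ge_2 by (simp add: field_simps)
qed simp

lemma sum_level_2_prod_le:
  assumes "strongly_log_concave E \<pi>"
  shows "(\<Sum>S\<in>level E \<pi> 2. pi_k E r \<pi> 2 S * (\<Prod>v\<in>S. z v))
    \<le> (\<Sum>v\<in>nonloops. pi_k E r \<pi> 1 {v} * z v)\<^sup>2"
proof -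
  have r: "real r > 1" using r_ge_2 by simp
  have "(\<Sum>S\<in>level E \<pi> 2. pi_k E r \<pi> 2 S * (\<Prod>v\<in>S. z v))
      = 2 / (real r * (real r - 1)) * (\<Sum>S\<in>level E \<pi> 2. marginal S * (\<Prod>v\<in>S. z v))"
    unfolding sum_distrib_left by (intro sum.cong refl) (simp add: pi_k_2_eq level_def)
  also have "\<dots> \<le> 2 / (real r * (real r - 1)) * ((real r - 1) / real r * (\<Sum>i\<in>E. z i * marginal {i})\<^sup>2 / 2)"
    unfolding sum_level_2_marginal_prod using pair_marginal_quadratic_le[OF assms] r
    by (intro mult_left_mono divide_right_mono) auto
  also have "\<dots> = (\<Sum>i\<in>E. marginal {i} * z i / real r)\<^sup>2"
    using r by (simp add: field_simps power2_eq_square sum_divide_distrib[symmetric] mult.commute)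
  also have "\<dots> = (\<Sum>v\<in>nonloops. pi_k E r \<pi> 1 {v} * z v)\<^sup>2"
    unfolding pi_k_1_eq using sum_nonloops_marginal[of "\<lambda>v. z v / real r"] by simp
  finally show ?thesis .
qed

end

theorem lemma4p2:
  fixes E :: "'a set" and r :: nat and \<pi> :: "'a set \<Rightarrow> real" and f2 :: "'a set \<Rightarrow> real"
  assumes "finite E"
    and "r \<ge> 2"
    and "homogeneous_distribution E r \<pi>"
    and "strongly_log_concave E \<pi>"
    and "\<forall>S\<in>level E \<pi> 2. f2 S \<ge> 0"
  shows "Ent (level E \<pi> 2) (pi_k E r \<pi> 2) f2
           \<ge> 2 * Ent {v\<in>E. {v} \<in> level E \<pi> 1} (\<lambda>v. pi_k E r \<pi> 1 {v}) (up1 E r \<pi> f2)"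
proof -
  interpret homogeneous_setting E r \<pi> using assms(1-3) by unfold_locales
  let ?X = "level E \<pi> 2" and ?\<mu>\<^sub>1 = "\<lambda>v. pi_k E r \<pi> 1 {v}" and ?f\<^sub>1 = "up1 E r \<pi> f2"
  have mean: "(\<Sum>v\<in>nonloops. ?\<mu>\<^sub>1 v * ?f\<^sub>1 v) = (\<Sum>S\<in>?X. pi_k E r \<pi> 2 S * f2 S)"
    using sum_pair_projection[OF finite_level finite_nonloops _ pi_k_1_mult_up1, where g = "\<lambda>_. 1"]
      level_2_pair
    by (auto simp: sum_distrib_right[symmetric] cong: sum.cong)
  have "2 * Ent nonloops ?\<mu>\<^sub>1 ?f\<^sub>1 \<le> Ent ?X (pi_k E r \<pi> 2) f2"
  proof (rule entropy_pair_projection_le[OF finite_level finite_nonloops level_2_pair])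
    show "?\<mu>\<^sub>1 v > 0" if "v \<in> nonloops" for v
      unfolding pi_k_1_eq using marginal_nonloop_pos[OF that] r_ge_2 by simp
    show "pi_k E r \<pi> 2 S > 0" if "S \<in> ?X" for S
      using that marginal_pos r_ge_2 by (auto simp: pi_k_2_eq level_def)
    show "(\<Sum>S\<in>?X. pi_k E r \<pi> 2 S * (\<Prod>v\<in>S. ?f\<^sub>1 v)) \<le> (\<Sum>S\<in>?X. pi_k E r \<pi> 2 S * f2 S)\<^sup>2"
      using sum_level_2_prod_le[OF assms(4), of ?f\<^sub>1] unfolding mean .
  qed (use assms(5) pi_k_1_mult_up1 in auto)
  then show ?thesis by (simp add: nonloops_def)
qed

end
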